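(* Let $\tau=e^{2\pi i/3}$, $q_1(t)=-t-1$, $q_\tau(t)=-t-\tau$, $q_{\tau^2}(t)=-t-\tau^2$, and let $t(i,j)$ be defined on the vertices $a_{i,j}$ of the following labelled graph: vertices (row $1$: $a_{1,1}$; rows $2,3$: $a_{i,1},a_{i,2}$; for $i\ge4$, $1\le j\le\frac i2+1$ if $i$ even, $1\le j\le\frac{i-1}{2}+1$ if $i$ odd); edges $a_{1,1}\to a_{2,1}$ labelled $q_\tau$, $a_{1,1}\to a_{2,2}$ labelled $q_{\tau^2}$, and for $k\ge1$, $1\le j\le k+1$: $a_{2k,j}\to a_{2k+1,j}$ labelled $q_1$, $a_{2k+1,j}\to a_{2k+2,j}$ labelled $q_\tau$, $a_{2k+1,j}\to a_{2k+2,j+1}$ labelled $q_{\tau^2}$; $t(1,1)=-2$ and $t(i,j)$ is obtained from $-2$ by applying the maps labelling the edges along a directed path from $a_{1,1}$ to $a_{i,j}$. Then \[\frac{t(i,j)-1}{-2-\tau}=c(i,j)+d(i,j)\,\tau\in\mathbb{Z}[\tau],\] where $c(1,1)=1$, $d(1,1)=-1$, and for $i\ge2$: - if $i$ is even: for $j=1$, $c(i,1)=0$, $d(i,1)=\frac i2$; for $2\le j\le \frac i2+1$, $c(i,j)=-(j-1)$, $d(i,j)=\frac i2+1-j$; - if $i$ is odd: for $j=1$, $c(i,1)=1$, $d(i,1)=-\frac{i-1}{2}-1$; for $2\le j\le\frac{i-1}{2}+1$, $c(i,j)=1+(j-1)$, $d(i,j)=-\frac{i-1}{2}-1+(j-1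)$.
   Context: Here $\tau$ is a primitive cube root of unity, so $1+\tau+\tau^2=0$. In the paper, $t(i,j)$ is the parameter of the elliptic pencil at entry $a_{i,j}$ of a diagram of bifurcations of Cremona maps, the recursion above describing how the parameter changes. *)

theory Defs
  imports Complex_Main
begin

definition tau :: complex where
  "tau = cis (2 * pi / 3)"

definition q :: "complex \<Rightarrow> complex \<Rightarrow> complex" where
  "q c t = - t - c"

definition vertex :: "nat \<Rightarrow> nat \<Rightarrow> bool" where
  "vertex i j \<longleftrightarrow> (i = 1 \<and> j = 1)
     \<or> (i = 2 \<and> 1 \<le> j \<and> j \<le> 2)
     \<or> (i = 3 \<and> 1 \<le> j \<and> j \<le> 2)
     \<or> (i \<ge> 4 \<and> even i \<and> 1 \<le> j \<and> j \<le> i div 2 + 1)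
     \<or> (i \<ge> 4 \<and> odd i \<and> 1 \<le> j \<and> j \<le> (i - 1) div 2 + 1)"

definition edge :: "nat \<times> nat \<Rightarrow> nat \<times> nat \<Rightarrow> (complex \<Rightarrow> complex) \<Rightarrow> bool" where
  "edge u v f \<longleftrightarrow>
     (u = (1,1) \<and> v = (2,1) \<and> f = q tau)
   \<or> (u = (1,1) \<and> v = (2,2) \<and> f = q (tau^2))
   \<or> (\<exists>k j. k \<ge> 1 \<and> 1 \<le> j \<and> j \<le> k + 1 \<and>
        ((u = (2*k, j) \<and> v = (2*k+1, j) \<and> f = q 1)
       \<or> (u = (2*k+1, j) \<and> v = (2*k+2, j) \<and> f = q tau)
       \<or> (u = (2*k+1, j) \<and> v = (2*k+2, j+1) \<and> f = q (tau^2))))"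

inductive path_val :: "nat \<times> nat \<Rightarrow> complex \<Rightarrow> bool" where
  start: "path_val (1,1) (-2)"
| step: "path_val u x \<Longrightarrow> edge u v f \<Longrightarrow> path_val v (f x)"

definition cc :: "nat \<Rightarrow> nat \<Rightarrow> int" where
  "cc i j = (if i = 1 then 1
     else if even i then (if j = 1 then 0 else - (int j - 1))
     else (if j = 1 then 1 else 1 + (int j - 1)))"

definition dd :: "nat \<Rightarrow> nat \<Rightarrow> int" where
  "dd i j = (if i = 1 then -1
     else if even i then (if j = 1 then int i div 2 else int i div 2 + 1 - int j)
     else (if j = 1 then - ((int i - 1) div 2) - 1
           else - ((int i - 1) div 2) - 1 + (int j - 1)))"

end

theory Submission
  imports Defs
begin

text \<open>Write \<open>t = 1 + (-2 - \<tau>) (c + d \<tau>)\<close>. Since \<open>q\<^sub>w(t) - 1 = -(t - 1) - (w + 2)\<close> and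
  \<open>1 + 2 = (-2 - \<tau>)(\<tau> - 1)\<close>, \<open>\<tau> + 2 = (-2 - \<tau>)(-1)\<close>, \<open>\<tau>\<^sup>2 + 2 = (-2 - \<tau>)\<tau>\<close>,
  the three edge maps act on the coordinates \<open>(c, d)\<close> as \<open>(1 - c, -1 - d)\<close>, \<open>(1 - c, -d)\<close>
  and \<open>(-c, -1 - d)\<close>. These affine maps carry the claimed coordinates of the tail of every
  edge to those of its head, so by induction along paths every value reaching \<open>a\<^sub>i\<^sub>,\<^sub>j\<close> has the
  claimed coordinates. Every vertex other than \<open>a\<^sub>1\<^sub>,\<^sub>1\<close> has an incoming edge from the
  previous row, so every vertex is reached.\<close>

lemma tau_eq: "tau = Complex (-1/2) (sqrt 3 / 2)"
  by (simp add: tau_def cis.ctr cos_120 sin_120)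

lemma tau_squared: "tau\<^sup>2 = -1 - tau"
  by (simp add: tau_eq complex_eq_iff power2_eq_square)

lemma minus_two_minus_tau_nonzero: "-2 - tau \<noteq> 0"
  by (simp add: tau_eq complex_eq_iff)

definition eisenstein_point :: "int \<Rightarrow> int \<Rightarrow> complex" where
  "eisenstein_point c d = 1 + (-2 - tau) * (of_int c + of_int d * tau)"

lemma eisenstein_point_coords:
  "(eisenstein_point c d - 1) / (-2 - tau) = of_int c + of_int d * tau"
  using minus_two_minus_tau_nonzero by (simp add: eisenstein_point_def)

lemma q_one_eisenstein_point: "q 1 (eisenstein_point c d) = eisenstein_point (1 - c) (-1 - d)"
  using tau_squared unfolding eisenstein_point_def q_def of_int_diff of_int_minus of_int_1 by algebra

lemma q_tau_eisenstein_point: "q tau (eisenstein_point c d) = eisenstein_point (1 - c) (- d)"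
  by (simp add: eisenstein_point_def q_def algebra_simps)

lemma q_tau_squared_eisenstein_point:
  "q (tau\<^sup>2) (eisenstein_point c d) = eisenstein_point (- c) (-1 - d)"
  using tau_squared unfolding eisenstein_point_def q_def of_int_diff of_int_minus of_int_1 by algebra

definition t_closed_form :: "nat \<times> nat \<Rightarrow> complex" where
  "t_closed_form = (\<lambda>(i, j). eisenstein_point (cc i j) (dd i j))"

lemma edge_t_closed_form:
  assumes "edge u v f"
  shows "f (t_closed_form u) = t_closed_form v"
  using assms unfolding edge_def
  by (auto simp add: t_closed_form_def cc_def dd_def q_one_eisenstein_point q_tau_eisenstein_point
      q_tau_squared_eisenstein_point intro!: arg_cong2[where f = eisenstein_point])

lemma t_closed_form_root: "t_closed_form (1, 1) = -2"
  using tau_squared by (simp add: t_closed_form_def eisenstein_point_def cc_def dd_def) algebra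

lemma path_val_eq_t_closed_form: "path_val v x \<Longrightarrow> x = t_closed_form v"
proof (induction rule: path_val.induct)
  case start
  show ?case by (rule t_closed_form_root[symmetric])
next
  case step
  then show ?case by (simp add: edge_t_closed_form)
qed

lemma vertex_iff: "vertex i j \<longleftrightarrow> 1 \<le> i \<and> 1 \<le> j \<and> j \<le> i div 2 + 1"
  unfolding vertex_def by (auto elim: oddE)

lemma vertex_has_parent:
  assumes "vertex i j" "2 \<le> i"
  obtains i' j' f where "vertex i' j'" "i' < i" "edge (i', j') (i, j) f"
proof -
  have j: "1 \<le> j" "j \<le> i div 2 + 1"
    using assms(1) by (auto simp: vertex_iff)
  consider "i = 2" | k where "1 \<le> k" "i = 2*k + 1" | k where "1 \<le> k" "i = 2*k + 2"
  proof (cases "even i")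
    case True
    then obtain m where "i = 2*m" by blast
    with assms(2) that(1) that(3)[of "m - 1"] show thesis by (cases "m = 1") auto
  next
    case False
    then obtain m where "i = 2*m + 1" by (blast elim: oddE)
    with assms(2) that(2)[of m] show thesis by auto
  qed
  then show thesis
  proof cases
    case 1
    with j have "edge (1, 1) (i, j) (if j = 1 then q tau else q (tau\<^sup>2))"
      by (auto simp: edge_def)
    with 1 show thesis by (intro that) (auto simp: vertex_iff)
  next
    case (2 k)
    with j have "edge (2*k, j) (i, j) (q 1)"
      unfolding edge_def by auto
    with 2 j show thesis by (intro that) (auto simp: vertex_iff)
  next
    case (3 k)
    show thesis
    proof (cases "j = 1")
      case True
      with 3 have "edge (2*k + 1, 1) (i, j) (q tau)"
        unfolding edge_def by auto
      with 3 show thesis by (intro that) (auto simp: vertex_iff)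
    next
      case False
      with 3 j have "edge (2*k + 1, j - 1) (i, j) (q (tau\<^sup>2))"
        unfolding edge_def by (intro disjI2 exI[of _ k] exI[of _ "j - 1"]) auto
      with 3 j False show thesis by (intro that) (auto simp: vertex_iff)
    qed
  qed
qed

lemma vertex_reachable: "vertex i j \<Longrightarrow> \<exists>x. path_val (i, j) x"
proof (induction i arbitrary: j rule: less_induct)
  case (less i)
  show ?case
  proof (cases "i \<le> 1")
    case True
    with less.prems have "(i, j) = (1, 1)" by (auto simp: vertex_iff)
    then show ?thesis using path_val.start by auto
  next
    case False
    with less.prems obtain i' j' f where "vertex i' j'" "i' < i" "edge (i', j') (i, j) f"
      by (auto elim: vertex_has_parent)
    then show ?thesis using less.IH path_val.step by blast
  qed
qed

theorem mainTheorem3: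
  assumes "vertex i j"
  shows "(\<exists>x. path_val (i, j) x) \<and>
         (\<forall>x. path_val (i, j) x \<longrightarrow>
              (x - 1) / (-2 - tau) = of_int (cc i j) + of_int (dd i j) * tau)"
proof (intro conjI allI impI)
  show "\<exists>x. path_val (i, j) x"
    using assms by (rule vertex_reachable)
next
  fix x
  assume "path_val (i, j) x"
  then have "x = eisenstein_point (cc i j) (dd i j)"
    by (auto dest: path_val_eq_t_closed_form simp: t_closed_form_def)
  then show "(x - 1) / (-2 - tau) = of_int (cc i j) + of_int (dd i j) * tau"
    by (simp add: eisenstein_point_coords)
qed

end
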